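(* Let $E$ be a real Hilbert space with $\dim(E)\ge2$, $h\in E$ a unit vector, and $f:\mathbb{R}_{\ge0}\to\mathbb{R}_{\ge0}$ with $f(d)>0$ iff $d>0$. Let $x\preceq_f y\iff f(\|y_\perp-x_\perp\|)\le y_h-x_h$. Assume that $\preceq_f$ is topologically closed in $E\times E$, and that $f$ is square-superadditive, or merely superadditive in case $\dim(E)=2$. Then every pair of elements of $E$ has a join in $(E,\preceq_f)$.
   Context: For $x\in E$ write $x=x_h h+x_\perp$ with $x_h=(x,h)$ and $x_\perp$ orthogonal to $h$. The join of $P\subseteq E$ is an $x$ with $p\preceq_f x$ for all $p\in P$ and $x\preceq_f y$ for every $y$ with $p\preceq_f y$ for all $p\in P$. $f$ is superadditive if $f(x+y)\ge f(x)+f(y)$ for all $x,y\ge0$, and square-superadditive if $f(\sqrt{x^2+y^2})\ge f(x)+f(y)$ for all $x,y\ge0$. *)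

theory Defs
  imports "HOL-Analysis.Analysis"
begin

definition dim_ge2 :: "'a::real_vector itself \<Rightarrow> bool" where
  "dim_ge2 _ \<longleftrightarrow> (\<exists>u v::'a. u \<noteq> v \<and> independent {u, v})"

definition dim_eq2 :: "'a::real_vector itself \<Rightarrow> bool" where
  "dim_eq2 _ \<longleftrightarrow> (\<exists>u v::'a. u \<noteq> v \<and> independent {u, v} \<and> span {u, v} = UNIV)"

definition hcomp :: "'a::real_inner \<Rightarrow> 'a \<Rightarrow> real" where
  "hcomp h x = inner x h"

definition perp :: "'a::real_inner \<Rightarrow> 'a \<Rightarrow> 'a" where
  "perp h x = x - inner x h *\<^sub>R h"

definition prec :: "(real \<Rightarrow> real) \<Rightarrow> 'a::real_inner \<Rightarrow> 'a \<Rightarrow> 'a \<Rightarrow> bool" where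
  "prec f h x y \<longleftrightarrow> f (norm (perp h y - perp h x)) \<le> hcomp h y - hcomp h x"

definition is_join :: "(real \<Rightarrow> real) \<Rightarrow> 'a::real_inner \<Rightarrow> 'a set \<Rightarrow> 'a \<Rightarrow> bool" where
  "is_join f h P x \<longleftrightarrow> (\<forall>p\<in>P. prec f h p x) \<and>
     (\<forall>y. (\<forall>p\<in>P. prec f h p y) \<longrightarrow> prec f h x y)"

definition superadditive :: "(real \<Rightarrow> real) \<Rightarrow> bool" where
  "superadditive f \<longleftrightarrow> (\<forall>x y. x \<ge> 0 \<longrightarrow> y \<ge> 0 \<longrightarrow> f (x + y) \<ge> f x + f y)"

definition square_superadditive :: "(real \<Rightarrow> real) \<Rightarrow> bool" where
  "square_superadditive f \<longleftrightarrow>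
     (\<forall>x y. x \<ge> 0 \<longrightarrow> y \<ge> 0 \<longrightarrow> f (sqrt (x\<^sup>2 + y\<^sup>2)) \<ge> f x + f y)"

end

theory Submission
  imports Defs
begin

(* If a, b are incomparable, write b - a = D e + \<beta> h with e a unit vector orthogonal to h.
   The join is a + c e + max (f c) (\<beta> + f (D - c)) h, where c is the point of [0, D] at
   which s \<mapsto> f s crosses s \<mapsto> \<beta> + f (D - s).  For an upper bound y, (square-)
   superadditivity splits the cone condition at a (resp. b) along e on one side of the
   projection of y onto the line, which bounds the candidate directly or bounds nearby points
   on the other side of c; there one passes to the limit, since a closed order makes f lower
   semicontinuous and hence, being monotone, left-continuous. *)

lemma perp_orthogonal: "norm h = 1 \<Longrightarrow> perp h x \<bullet> h = 0"
  by (simp add: perp_def inner_diff_left norm_eq_1[symmetric])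

lemma perp_hcomp_decomposition: "x = perp h x + hcomp h x *\<^sub>R h"
  by (simp add: perp_def hcomp_def)

lemma perp_add: "perp h (x + y) = perp h x + perp h y"
  and perp_diff: "perp h (x - y) = perp h x - perp h y"
  and hcomp_add: "hcomp h (x + y) = hcomp h x + hcomp h y"
  and hcomp_diff: "hcomp h (x - y) = hcomp h x - hcomp h y"
  by (simp_all add: perp_def hcomp_def inner_add_left inner_diff_left algebra_simps)

lemma perp_orthogonal_eq: "v \<bullet> h = 0 \<Longrightarrow> perp h v = v"
  and hcomp_orthogonal_eq: "v \<bullet> h = 0 \<Longrightarrow> hcomp h v = 0"
  by (simp_all add: perp_def hcomp_def)

lemma perp_scaleR_unit: "norm h = 1 \<Longrightarrow> perp h (t *\<^sub>R h) = 0"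
  and hcomp_scaleR_unit: "norm h = 1 \<Longrightarrow> hcomp h (t *\<^sub>R h) = t"
  by (simp_all add: perp_def hcomp_def norm_eq_1[symmetric])

lemmas perp_hcomp_simps = perp_add perp_diff hcomp_add hcomp_diff
  perp_orthogonal_eq hcomp_orthogonal_eq perp_scaleR_unit hcomp_scaleR_unit

lemma prec_iff_diff: "prec f h x y \<longleftrightarrow> f (norm (perp h (y - x))) \<le> hcomp h (y - x)"
  by (simp add: prec_def perp_diff hcomp_diff)

lemma prec_add_right_iff:
  assumes "norm h = 1" "v \<bullet> h = 0"
  shows "prec f h x (x + v + t *\<^sub>R h) \<longleftrightarrow> f (norm v) \<le> t"
  using assms by (simp add: prec_def perp_hcomp_simps)

lemma prec_add_left_iff:
  assumes "norm h = 1" "v \<bullet> h = 0"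
  shows "prec f h (x + v + t *\<^sub>R h) y \<longleftrightarrow>
    f (norm (perp h (y - x) - v)) \<le> hcomp h (y - x) - t"
  using assms by (simp add: prec_def perp_hcomp_simps algebra_simps)

lemma square_superadditive_mono_on:
  assumes "square_superadditive f" "\<forall>d\<ge>0. f d \<ge> 0"
  shows "mono_on {0..} f"
proof (rule mono_onI)
  fix p q :: real assume "p \<in> {0..}" "p \<le> q"
  define r where "r = sqrt (q\<^sup>2 - p\<^sup>2)"
  have "r \<ge> 0" "sqrt (p\<^sup>2 + r\<^sup>2) = q"
    using \<open>p \<in> {0..}\<close> \<open>p \<le> q\<close> by (simp_all add: r_def power_mono)
  then have "f p + f r \<le> f q" "0 \<le> f r"
    using assms \<open>p \<in> {0..}\<close> unfolding square_superadditive_def by (metis atLeast_iff)+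
  then show "f p \<le> f q" by simp
qed

lemma superadditive_mono_on:
  assumes "superadditive f" "\<forall>d\<ge>0. f d \<ge> 0"
  shows "mono_on {0..} f"
proof (rule mono_onI)
  fix p q :: real assume "p \<in> {0..}" "p \<le> q"
  then have "f p + f (q - p) \<le> f q" "0 \<le> f (q - p)"
    using assms unfolding superadditive_def
    by (metis add.commute diff_add_cancel diff_ge_0_iff_ge atLeast_iff)+
  then show "f p \<le> f q" by simp
qed

lemma square_superadditive_norm_add:
  fixes A B :: "'a::real_inner"
  assumes "square_superadditive f" "mono_on {0..} f" "0 \<le> A \<bullet> B"
  shows "f (norm A) + f (norm B) \<le> f (norm (A + B))"
proof -
  have "(norm (A + B))\<^sup>2 = (norm A)\<^sup>2 + (norm B)\<^sup>2 + 2 * (A \<bullet> B)"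
    by (simp add: power2_norm_eq_inner inner_add_left inner_add_right inner_commute)
  then have "sqrt ((norm A)\<^sup>2 + (norm B)\<^sup>2) \<le> norm (A + B)"
    using assms(3) by (intro real_le_lsqrt) auto
  then have "f (sqrt ((norm A)\<^sup>2 + (norm B)\<^sup>2)) \<le> f (norm (A + B))"
    using assms(2) by (simp add: mono_onD)
  moreover have "f (norm A) + f (norm B) \<le> f (sqrt ((norm A)\<^sup>2 + (norm B)\<^sup>2))"
    using assms(1) unfolding square_superadditive_def by simp
  ultimately show ?thesis by simp
qed

lemma superadditive_norm_add_collinear:
  fixes A B :: "'a::real_inner"
  assumes "superadditive f" "collinear {0, A, B}" "0 \<le> A \<bullet> B"
  shows "f (norm A) + f (norm B) \<le> f (norm (A + B))"
proof -
  have "\<bar>A \<bullet> B\<bar> = norm A * norm B"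
    using assms(2) norm_cauchy_schwarz_equal by blast
  then have "norm A *\<^sub>R B = norm B *\<^sub>R A"
    using assms(3) norm_cauchy_schwarz_eq by force
  then have "norm (A + B) = norm A + norm B"
    using norm_triangle_eq by blast
  then show ?thesis
    using assms(1) unfolding superadditive_def by simp
qed

lemma collinear_orthogonal_dim_eq2:
  fixes A B h :: "'a::real_inner"
  assumes "dim_eq2 TYPE('a)" "h \<noteq> 0" "A \<bullet> h = 0" "B \<bullet> h = 0"
  shows "collinear {0, A, B}"
proof (cases "A = 0 \<or> B = 0 \<or> A = B")
  case True
  then show ?thesis by (metis collinear_lemma scaleR_one)
next
  case False
  obtain u v :: 'a where uv: "independent {u, v}" "span {u, v} = UNIV"
    using assms(1) unfolding dim_eq2_def by blast
  have distinct: "h \<noteq> A" "h \<noteq> B"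
    using assms by auto
  have "card {h, A, B} = 3"
    using False distinct by auto
  moreover have "card {u, v} \<le> 2"
    by (simp add: card_insert_le_m1)
  ultimately have "dependent {h, A, B}"
    using independent_span_bound[of "{u, v}" "{h, A, B}"] uv by auto
  then obtain w where w: "\<exists>x\<in>{h, A, B}. w x \<noteq> 0" "(\<Sum>x\<in>{h, A, B}. w x *\<^sub>R x) = 0"
    using dependent_finite[of "{h, A, B}"] by auto
  then have sum: "w h *\<^sub>R h + w A *\<^sub>R A + w B *\<^sub>R B = 0"
    using False distinct by (simp add: add.assoc)
  moreover have "(w h *\<^sub>R h + w A *\<^sub>R A + w B *\<^sub>R B) \<bullet> h = w h * (h \<bullet> h)"
    using assms(3,4) by (simp add: inner_add_left)
  ultimately have "w h * (h \<bullet> h) = 0"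
    by simp
  then have "w h = 0"
    using assms(2) by simp
  then have wB: "w B \<noteq> 0" and "w B *\<^sub>R B = (- w A) *\<^sub>R A"
    using w(1) sum False by (auto simp: add_eq_0_iff2)
  then have "B = (- w A / w B) *\<^sub>R A"
    by (metis (no_types) scaleR_scaleR divide_inverse_commute inverse_eq_divide
        scaleR_one divide_self_if)
  then show ?thesis
    unfolding collinear_lemma by blast
qed

lemma crossing_point:
  fixes f :: "real \<Rightarrow> real"
  assumes mono: "mono_on {0..} f" and "0 \<le> D" "f 0 \<le> \<beta> + f D"
  obtains c where "0 \<le> c" "c \<le> D"
    "\<And>s. 0 \<le> s \<Longrightarrow> s < c \<Longrightarrow> f s \<le> \<beta> + f (D - s)"
    "\<And>s. c < s \<Longrightarrow> s \<le> D \<Longrightarrow> \<beta> + f (D - s) < f s"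
proof
  define S where "S = {s. 0 \<le> s \<and> s \<le> D \<and> f s \<le> \<beta> + f (D - s)}"
  have "0 \<in> S" and bdd: "bdd_above S"
    using assms(2,3) by (auto simp: S_def intro: bdd_aboveI[of _ D])
  then show "0 \<le> Sup S"
    by (rule cSup_upper)
  show "Sup S \<le> D"
    using \<open>0 \<in> S\<close> by (intro cSup_least) (auto simp: S_def)
  show "f s \<le> \<beta> + f (D - s)" if "0 \<le> s" "s < Sup S" for s
  proof -
    obtain s' where s': "s' \<in> S" "s < s'"
      using \<open>s < Sup S\<close> less_cSup_iff[OF _ bdd] \<open>0 \<in> S\<close> by blast
    then have "f s \<le> f s'"
      using mono that by (simp add: S_def mono_onD)
    also have "\<dots> \<le> \<beta> + f (D - s')"
      using s' by (simp add: S_def)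
    also have "\<dots> \<le> \<beta> + f (D - s)"
      using mono s' by (simp add: S_def mono_onD)
    finally show ?thesis .
  qed
  show "\<beta> + f (D - s) < f s" if "Sup S < s" "s \<le> D" for s
    using cSup_upper[OF _ bdd, of s] that \<open>0 \<le> Sup S\<close> by (force simp: S_def)
qed

locale cone_order =
  fixes f :: "real \<Rightarrow> real" and h :: "'a::real_inner"
  assumes unit: "norm h = 1"
    and f_zero: "f 0 = 0"
    and f_mono: "mono_on {0..} f"
    and orthogonal_norm_add: "\<And>A B. A \<bullet> h = 0 \<Longrightarrow> B \<bullet> h = 0 \<Longrightarrow> 0 \<le> A \<bullet> B \<Longrightarrow>
      f (norm A) + f (norm B) \<le> f (norm (A + B))"
    and closed_prec: "closed {(x, y). prec f h x y}"
begin

lemma closed_prec_lsc: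
  assumes "F \<noteq> bot" "(v \<longlongrightarrow> v0) F" "(t \<longlongrightarrow> q) F"
    and ev: "eventually (\<lambda>i. v i \<bullet> h = 0 \<and> f (norm (v i)) \<le> t i) F"
  shows "f (norm v0) \<le> q"
proof -
  have "eventually (\<lambda>i. (0, v i + t i *\<^sub>R h) \<in> {(x, y). prec f h x y}) F"
    using ev by (rule eventually_mono) (use prec_add_right_iff[OF unit, where x = 0] in simp)
  moreover have "((\<lambda>i. (0, v i + t i *\<^sub>R h)) \<longlongrightarrow> (0, v0 + q *\<^sub>R h)) F"
    using assms(2,3) by (intro tendsto_intros)
  ultimately have "(0, v0 + q *\<^sub>R h) \<in> {(x, y). prec f h x y}"
    using closed_prec assms(1) by (rule_tac Lim_in_closed_set)
  then have "prec f h 0 (v0 + q *\<^sub>R h)"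
    by simp
  moreover have "v0 \<in> {x. h \<bullet> x = 0}"
    using ev assms(1,2) by (intro Lim_in_closed_set[OF closed_hyperplane])
      (auto elim: eventually_mono simp: inner_commute)
  ultimately show ?thesis
    using prec_add_right_iff[OF unit, where x = 0 and v = v0] by (simp add: inner_commute)
qed

lemma f_left_continuous:
  assumes e: "norm e = 1" "e \<bullet> h = 0" and "0 < c"
  shows "(f \<longlongrightarrow> f c) (at_left c)"
proof (rule increasing_tendsto)
  show "eventually (\<lambda>s. f s \<le> f c) (at_left c)"
    using eventually_at_left_real[OF \<open>0 < c\<close>]
    by (rule eventually_mono) (auto intro: mono_onD[OF f_mono])
  fix y assume "y < f c"
  have "\<exists>s0. 0 \<le> s0 \<and> s0 < c \<and> y < f s0"
  proof (rule ccontr)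
    assume no_witness: "\<not> ?thesis"
    have ev: "eventually (\<lambda>s. (s *\<^sub>R e) \<bullet> h = 0 \<and> f (norm (s *\<^sub>R e)) \<le> y) (at_left c)"
      using eventually_at_left_real[OF \<open>0 < c\<close>] by (rule eventually_mono) (use e no_witness in auto)
    have "f (norm (c *\<^sub>R e)) \<le> y"
      by (rule closed_prec_lsc[OF _ _ _ ev]) (auto intro!: tendsto_intros)
    then show False
      using e \<open>0 < c\<close> \<open>y < f c\<close> by simp
  qed
  then obtain s0 where "0 \<le> s0" "s0 < c" "y < f s0"
    by blast
  show "eventually (\<lambda>s. y < f s) (at_left c)"
    using eventually_at_left_real[OF \<open>s0 < c\<close>]
  proof (rule eventually_mono)
    fix s assume "s \<in> {s0<..<c}"
    then have "f s0 \<le> f s"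
      using \<open>0 \<le> s0\<close> by (intro mono_onD[OF f_mono]) auto
    then show "y < f s"
      using \<open>y < f s0\<close> by simp
  qed
qed

lemma prec_crossing_point:
  assumes e: "norm e = 1" "e \<bullet> h = 0" and c: "0 \<le> c" "c \<le> D"
    and below: "\<And>s. 0 \<le> s \<Longrightarrow> s < c \<Longrightarrow> f s \<le> \<beta> + f (D - s)"
    and a_le_y: "prec f h a y" and b_le_y: "prec f h (a + D *\<^sub>R e + \<beta> *\<^sub>R h) y"
  shows "prec f h (a + c *\<^sub>R e + f c *\<^sub>R h) y"
proof -
  define Y L where "Y = perp h (y - a)" and "L = hcomp h (y - a)"
  have Yh: "Y \<bullet> h = 0"
    by (simp add: Y_def perp_orthogonal unit)
  have along: "prec f h (a + s *\<^sub>R e + t *\<^sub>R h) y \<longleftrightarrow> f (norm (Y - s *\<^sub>R e)) \<le> L - t" for s t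
    using prec_add_left_iff[OF unit, of "s *\<^sub>R e"] e by (simp add: Y_def L_def)
  have at_a: "f (norm Y) \<le> L"
    using along[of 0 0] a_le_y by simp
  have at_b: "f (norm (Y - D *\<^sub>R e)) \<le> L - \<beta>"
    using along[of D \<beta>] b_le_y by simp
  have e_inner: "e \<bullet> (Y - s *\<^sub>R e) = Y \<bullet> e - s" for s
    using e by (simp add: inner_diff_right inner_commute norm_eq_1)
  have split_a: "f s + f (norm (Y - s *\<^sub>R e)) \<le> L" if "0 \<le> s" "s \<le> Y \<bullet> e" for s
  proof -
    have "f (norm (s *\<^sub>R e)) + f (norm (Y - s *\<^sub>R e)) \<le> f (norm (s *\<^sub>R e + (Y - s *\<^sub>R e)))"
      using that e Yh by (intro orthogonal_norm_add) (simp_all add: e_inner inner_diff_left)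
    then show ?thesis
      using at_a e that by simp
  qed
  have split_b: "f (D - s) + f (norm (Y - s *\<^sub>R e)) \<le> L - \<beta>" if "Y \<bullet> e \<le> s" "s \<le> D" for s
  proof -
    have "f (norm ((s - D) *\<^sub>R e)) + f (norm (Y - s *\<^sub>R e)) \<le>
        f (norm ((s - D) *\<^sub>R e + (Y - s *\<^sub>R e)))"
      using that e Yh
      by (intro orthogonal_norm_add) (simp_all add: e_inner inner_diff_left mult_nonpos_nonpos)
    moreover have "(s - D) *\<^sub>R e + (Y - s *\<^sub>R e) = Y - D *\<^sub>R e"
      by (simp add: algebra_simps)
    ultimately show ?thesis
      using at_b e that by simp
  qed
  have "f (norm (Y - c *\<^sub>R e)) \<le> L - f c"
  proof (cases "c \<le> max (Y \<bullet> e) 0")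
    case True
    then consider "c = 0" | "c \<le> Y \<bullet> e"
      using c by linarith
    then show ?thesis
      using at_a f_zero split_a[of c] c by cases auto
  next
    case False
    \<comment> \<open>Between the projection of Y and c, the split at b and the crossing inequality
      bound points left of c; let them tend to c.\<close>
    then have "max (Y \<bullet> e) 0 < c"
      by linarith
    from eventually_at_left_real[OF this]
    have "eventually (\<lambda>s. (Y - s *\<^sub>R e) \<bullet> h = 0 \<and> f (norm (Y - s *\<^sub>R e)) \<le> L - f s) (at_left c)"
    proof (rule eventually_mono)
      fix s assume "s \<in> {max (Y \<bullet> e) 0<..<c}"
      then show "(Y - s *\<^sub>R e) \<bullet> h = 0 \<and> f (norm (Y - s *\<^sub>R e)) \<le> L - f s"
        using split_b[of s] below[of s] Yh e c by (auto simp: inner_diff_left)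
    qed
    moreover have "(f \<longlongrightarrow> f c) (at_left c)"
      using False by (intro f_left_continuous[OF e]) auto
    ultimately show ?thesis
      by (intro closed_prec_lsc[of "at_left c"]) (auto intro!: tendsto_intros)
  qed
  then show ?thesis
    using along by simp
qed

lemma join_if_prec: "prec f h a b \<Longrightarrow> is_join f h {a, b} b"
  by (simp add: is_join_def prec_def f_zero)

lemma join_if_incomparable:
  assumes ab: "\<not> prec f h a b" and ba: "\<not> prec f h b a"
  shows "\<exists>x. is_join f h {a, b} x"
proof -
  define D \<beta> where "D = norm (perp h (b - a))" and "\<beta> = hcomp h (b - a)"
  have fD: "\<beta> < f D" "- \<beta> < f D"
    using ab ba by (simp_all add: prec_iff_diff D_def \<beta>_def perp_diff hcomp_diff norm_minus_commute)
  then have "D \<noteq> 0"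
    using f_zero by auto
  then have "0 < D"
    by (simp add: D_def)
  define e where "e = (1 / D) *\<^sub>R perp h (b - a)"
  have e: "norm e = 1" "e \<bullet> h = 0"
    using \<open>0 < D\<close> by (simp_all add: e_def D_def perp_orthogonal unit)
  have b_eq: "b = a + D *\<^sub>R e + \<beta> *\<^sub>R h"
    using perp_hcomp_decomposition[of "b - a" h] \<open>0 < D\<close> by (simp add: e_def \<beta>_def algebra_simps)
  obtain c where c: "0 \<le> c" "c \<le> D"
    and below: "\<And>s. 0 \<le> s \<Longrightarrow> s < c \<Longrightarrow> f s \<le> \<beta> + f (D - s)"
    and above: "\<And>s. c < s \<Longrightarrow> s \<le> D \<Longrightarrow> \<beta> + f (D - s) < f s"
    using crossing_point[OF f_mono, of D \<beta>] \<open>0 < D\<close> fD f_zero by auto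
  define x where "x = a + c *\<^sub>R e + max (f c) (\<beta> + f (D - c)) *\<^sub>R h"
  have "prec f h a x"
    using prec_add_right_iff[OF unit, of "c *\<^sub>R e"] e c by (simp add: x_def)
  moreover have "prec f h b x"
  proof -
    have "x = b + (D - c) *\<^sub>R (- e) + (max (f c) (\<beta> + f (D - c)) - \<beta>) *\<^sub>R h"
      by (simp add: x_def b_eq algebra_simps)
    then show ?thesis
      using prec_add_right_iff[OF unit, of "(D - c) *\<^sub>R (- e)"] e c by simp
  qed
  moreover have "prec f h x y" if a_le_y: "prec f h a y" and b_le_y: "prec f h b y" for y
  proof -
    have "prec f h (a + c *\<^sub>R e + f c *\<^sub>R h) y"
      using prec_crossing_point[OF e c below a_le_y] b_le_y b_eq by simp
    \<comment> \<open>The same bound seen from b: e, \<beta>, c become - e, - \<beta>, D - c.\<close>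
    moreover have "prec f h (b + (D - c) *\<^sub>R (- e) + f (D - c) *\<^sub>R h) y"
    proof (rule prec_crossing_point[where \<beta> = "- \<beta>"])
      show "norm (- e) = 1" "- e \<bullet> h = 0" "0 \<le> D - c" "D - c \<le> D"
        using e c by simp_all
      show "f s \<le> - \<beta> + f (D - s)" if "0 \<le> s" "s < D - c" for s
        using above[of "D - s"] that by simp
      show "prec f h (b + D *\<^sub>R - e + - \<beta> *\<^sub>R h) y"
        using a_le_y by (simp add: b_eq algebra_simps)
    qed (rule b_le_y)
    moreover have "b + (D - c) *\<^sub>R (- e) + f (D - c) *\<^sub>R h = a + c *\<^sub>R e + (\<beta> + f (D - c)) *\<^sub>R h"
      by (simp add: b_eq algebra_simps)
    ultimately show ?thesis
      by (simp add: x_def max_def)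
  qed
  ultimately show ?thesis
    unfolding is_join_def by auto
qed

lemma join_exists: "\<exists>x. is_join f h {a, b} x"
  using join_if_prec[of a b] join_if_prec[of b a] join_if_incomparable[of a b]
  by (metis insert_commute)

end

theorem mainTheorem17:
  fixes f :: "real \<Rightarrow> real" and h :: "'a::{real_inner, complete_space}"
  assumes dim: "dim_ge2 TYPE('a)"
    and h_unit: "norm h = 1"
    and f_nonneg: "\<forall>d\<ge>0. f d \<ge> 0"
    and f_pos: "\<forall>d\<ge>0. f d > 0 \<longleftrightarrow> d > 0"
    and closed_rel: "closed {(x, y). prec f h x y}"
    and f_cond: "square_superadditive f \<or> (superadditive f \<and> dim_eq2 TYPE('a))"
  shows "\<forall>a b. \<exists>x. is_join f h {a, b} x"
proof -
  have f_zero: "f 0 = 0"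
    using f_nonneg f_pos by force
  have f_mono: "mono_on {0..} f"
    using f_cond f_nonneg square_superadditive_mono_on superadditive_mono_on by blast
  have "f (norm A) + f (norm B) \<le> f (norm (A + B))"
    if "A \<bullet> h = 0" "B \<bullet> h = 0" "0 \<le> A \<bullet> B" for A B :: 'a
    using f_cond
  proof
    assume "square_superadditive f"
    then show ?thesis
      using square_superadditive_norm_add f_mono that(3) by blast
  next
    assume "superadditive f \<and> dim_eq2 TYPE('a)"
    moreover have "h \<noteq> 0"
      using h_unit by auto
    ultimately show ?thesis
      using superadditive_norm_add_collinear collinear_orthogonal_dim_eq2 that by blast
  qed
  then interpret cone_order f h
    using h_unit f_zero f_mono closed_rel by unfold_locales
  show ?thesis
    using join_exists by blast
qed

end
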